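(* Let $\mathscr C\subseteq\mathsf{CT}^{\mathsf{std}}_{\forall\forall}$ be a class of finite sets of tgds that is closed under semi-enrichment (i.e. $\Sigma\in\mathscr C$ implies $\widetilde\Sigma\in\mathscr C$). Then $\mathscr C\subseteq\mathsf{CT}^{\mathsf{sobl}}_{\forall\forall}$.
   Context: The semi-enrichment of a tgd $\xi=\alpha(\bar x,\bar y)\rightarrow\exists\bar z\,\beta(\bar x,\bar z)$ over schema $\mathbf R$ ($\bar x$ = variables in both body and head) is $\tilde\xi=\alpha(\bar x,\bar y)\rightarrow\exists\bar z\,\beta(\bar x,\bar z),H(\bar x)$ with $H$ a new relation symbol not in $\mathbf R$; $\widetilde\Sigma=\{\tilde\xi:\xi\in\Sigma\}$. Instances are finite sets of atoms over constants and nulls. A trigger $(\xi,h)$ on $I$ has $h(\alpha)\subseteq I$; it is active if no extension $h'$ has $h'(\beta)\subseteq I$; firing adds $h'(\beta)$ with fresh nulls for existential variables. Standard chase sequences fire only active triggers; semi-oblivious ones fire any triggers but never two triggers $(\xi,h),(\xi,g)$ of the same tgd with $h(\bar x)=g(\bar x)$. Infinite sequences are assumed fair; a sequence terminates if finite with no further possible step. $\mathsf{CT}^\star_{\forall\forall}$: finite tgd sets such that for every instance all $\star$-chase sequences terminate. *)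

theory Defs
  imports Main
begin

datatype trm = Cst nat | Nul nat

type_synonym fact = "nat \<times> trm list"
type_synonym inst = "fact set"
type_synonym vatom = "nat \<times> nat list"
type_synonym tgd = "vatom set \<times> vatom set"
type_synonym trigger = "tgd \<times> (nat \<Rightarrow> trm)"

definition vars :: "vatom set \<Rightarrow> nat set" where
  "vars A = (\<Union>a\<in>A. set (snd a))"

definition body :: "tgd \<Rightarrow> vatom set" where "body \<xi> = fst \<xi>"
definition head :: "tgd \<Rightarrow> vatom set" where "head \<xi> = snd \<xi>"

definition frontier :: "tgd \<Rightarrow> nat set" where
  "frontier \<xi> = vars (body \<xi>) \<inter> vars (head \<xi>)"

definition exvars :: "tgd \<Rightarrow> nat set" where
  "exvars \<xi> = vars (head \<xi>) - vars (body \<xi>)"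

definition wf_tgd :: "tgd \<Rightarrow> bool" where
  "wf_tgd \<xi> \<longleftrightarrow> finite (body \<xi>) \<and> finite (head \<xi>) \<and> body \<xi> \<noteq> {} \<and> head \<xi> \<noteq> {}"

definition inst_of :: "(nat \<Rightarrow> trm) \<Rightarrow> vatom set \<Rightarrow> inst" where
  "inst_of h A = (\<lambda>(r, xs). (r, map h xs)) ` A"

definition terms_of :: "inst \<Rightarrow> trm set" where
  "terms_of I = (\<Union>f\<in>I. set (snd f))"

definition is_trigger :: "tgd \<Rightarrow> (nat \<Rightarrow> trm) \<Rightarrow> inst \<Rightarrow> bool" where
  "is_trigger \<xi> h I \<longleftrightarrow> inst_of h (body \<xi>) \<subseteq> I"

definition active :: "tgd \<Rightarrow> (nat \<Rightarrow> trm) \<Rightarrow> inst \<Rightarrow> bool" where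
  "active \<xi> h I \<longleftrightarrow> is_trigger \<xi> h I \<and>
     \<not> (\<exists>h'. (\<forall>x\<in>vars (body \<xi>). h' x = h x) \<and> inst_of h' (head \<xi>) \<subseteq> I)"

definition fires :: "tgd \<Rightarrow> (nat \<Rightarrow> trm) \<Rightarrow> inst \<Rightarrow> inst \<Rightarrow> bool" where
  "fires \<xi> h I J \<longleftrightarrow> (\<exists>h'. (\<forall>x\<in>vars (body \<xi>). h' x = h x)
      \<and> inj_on h' (exvars \<xi>)
      \<and> (\<forall>z\<in>exvars \<xi>. (\<exists>n. h' z = Nul n) \<and> h' z \<notin> terms_of I)
      \<and> J = I \<union> inst_of h' (head \<xi>))"

datatype variant = Std | Sobl

definition applicable :: "variant \<Rightarrow> tgd set \<Rightarrow> (nat \<Rightarrow> inst) \<Rightarrow> (nat \<Rightarrow> trigger)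
    \<Rightarrow> nat \<Rightarrow> tgd \<Rightarrow> (nat \<Rightarrow> trm) \<Rightarrow> bool" where
  "applicable v \<Sigma> Is Ts i \<xi> h \<longleftrightarrow> \<xi> \<in> \<Sigma> \<and> is_trigger \<xi> h (Is i) \<and>
     (case v of
        Std \<Rightarrow> active \<xi> h (Is i)
      | Sobl \<Rightarrow> \<not> (\<exists>k<i. fst (Ts k) = \<xi> \<and> (\<forall>x\<in>frontier \<xi>. snd (Ts k) x = h x)))"

definition inf_chase_seq :: "variant \<Rightarrow> tgd set \<Rightarrow> inst \<Rightarrow> (nat \<Rightarrow> inst) \<Rightarrow> (nat \<Rightarrow> trigger) \<Rightarrow> bool" where
  "inf_chase_seq v \<Sigma> I0 Is Ts \<longleftrightarrow> Is 0 = I0 \<and>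
     (\<forall>i. applicable v \<Sigma> Is Ts i (fst (Ts i)) (snd (Ts i))
          \<and> fires (fst (Ts i)) (snd (Ts i)) (Is i) (Is (Suc i)))"

definition fair :: "variant \<Rightarrow> tgd set \<Rightarrow> (nat \<Rightarrow> inst) \<Rightarrow> (nat \<Rightarrow> trigger) \<Rightarrow> bool" where
  "fair v \<Sigma> Is Ts \<longleftrightarrow> (\<forall>i \<xi> h. applicable v \<Sigma> Is Ts i \<xi> h \<longrightarrow>
      (\<exists>j>i. \<not> applicable v \<Sigma> Is Ts j \<xi> h))"

text \<open>CT_forall_forall: finite tgd sets for which, for every (finite) instance,
every chase sequence terminates, i.e. no (fair) infinite chase sequence exists.\<close>
definition CT_AA :: "variant \<Rightarrow> tgd set set" where
  "CT_AA v = {\<Sigma>. finite \<Sigma> \<and> (\<forall>\<xi>\<in>\<Sigma>. wf_tgd \<xi>) \<and>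
     (\<forall>I0. finite I0 \<longrightarrow> \<not> (\<exists>Is Ts. inf_chase_seq v \<Sigma> I0 Is Ts \<and> fair v \<Sigma> Is Ts))}"

definition rels :: "tgd set \<Rightarrow> nat set" where
  "rels \<Sigma> = (\<Union>\<xi>\<in>\<Sigma>. fst ` (body \<xi> \<union> head \<xi>))"

definition semi_enrich :: "nat \<Rightarrow> tgd \<Rightarrow> tgd" where
  "semi_enrich H \<xi> = (body \<xi>, head \<xi> \<union> {(H, sorted_list_of_set (frontier \<xi>))})"

definition is_semi_enrichment :: "tgd set \<Rightarrow> tgd set \<Rightarrow> bool" where
  "is_semi_enrichment \<Sigma> \<Sigma>' \<longleftrightarrow> (\<exists>Hm. inj_on Hm \<Sigma> \<and> (\<forall>\<xi>\<in>\<Sigma>. Hm \<xi> \<notin> rels \<Sigma>) \<and>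
      \<Sigma>' = (\<lambda>\<xi>. semi_enrich (Hm \<xi>) \<xi>) ` \<Sigma>)"

end

theory Submission
  imports Defs
begin

text \<open>Given a fair infinite semi-oblivious chase sequence of \<open>\<Sigma>\<close>, build a standard chase
sequence of a semi-enrichment \<open>\<Sigma>'\<close> firing the same triggers: its instances are those of
the given sequence restricted to the relations of \<open>\<Sigma>\<close>, together with one fact
\<open>H\<^sub>\<xi>(h(x\<^sub>1),\<dots>,h(x\<^sub>n))\<close> for every trigger \<open>(\<xi>, h)\<close> fired so far.  Because the head of the
enriched tgd contains \<open>H\<^sub>\<xi>(x\<^sub>1,\<dots>,x\<^sub>n)\<close> over the frontier, an enriched trigger is active
exactly when no trigger of the same tgd with the same frontier image has fired, which is
the semi-oblivious condition.  Hence the new sequence is again infinite and fair,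
contradicting \<open>\<Sigma>' \<in> CT\<^sup>std\<^sub>\<forall>\<forall>\<close>.\<close>

lemma inst_of_cong: "(\<And>x. x \<in> vars A \<Longrightarrow> g x = h x) \<Longrightarrow> inst_of g A = inst_of h A"
  by (force simp: inst_of_def vars_def split: prod.splits intro!: image_cong)

lemma fst_inst_of: "fst ` inst_of h A = fst ` A"
  by (force simp: inst_of_def split: prod.splits)

lemma terms_of_inst_of: "terms_of (inst_of g A) = g ` vars A"
  by (force simp: terms_of_def inst_of_def vars_def split: prod.splits)

lemma terms_of_mono: "I \<subseteq> J \<Longrightarrow> terms_of I \<subseteq> terms_of J"
  by (auto simp: terms_of_def)

lemma rels_inst_of_body: "\<xi> \<in> \<Sigma> \<Longrightarrow> fst ` inst_of h (body \<xi>) \<subseteq> rels \<Sigma>"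
  by (auto simp: fst_inst_of rels_def)

lemma rels_inst_of_head: "\<xi> \<in> \<Sigma> \<Longrightarrow> fst ` inst_of h (head \<xi>) \<subseteq> rels \<Sigma>"
  by (auto simp: fst_inst_of rels_def)

definition frontier_list :: "tgd \<Rightarrow> nat list" where
  "frontier_list \<xi> = sorted_list_of_set (frontier \<xi>)"

lemma set_frontier_list:
  assumes "wf_tgd \<xi>"
  shows "set (frontier_list \<xi>) = frontier \<xi>"
proof -
  have "finite (vars (head \<xi>))"
    using assms by (simp add: wf_tgd_def vars_def)
  then show ?thesis
    by (simp add: frontier_list_def frontier_def)
qed

lemma set_frontier_list_subset_body:
  "wf_tgd \<xi> \<Longrightarrow> set (frontier_list \<xi>) \<subseteq> vars (body \<xi>)"
  by (simp add: set_frontier_list frontier_def)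

lemma map_frontier_list_eq_iff:
  "wf_tgd \<xi> \<Longrightarrow> map g (frontier_list \<xi>) = map h (frontier_list \<xi>) \<longleftrightarrow> (\<forall>x\<in>frontier \<xi>. g x = h x)"
  by (simp add: set_frontier_list)

lemma map_frontier_list_cong:
  "wf_tgd \<xi> \<Longrightarrow> \<forall>x\<in>vars (body \<xi>). g x = h x \<Longrightarrow> map g (frontier_list \<xi>) = map h (frontier_list \<xi>)"
  using set_frontier_list_subset_body[of \<xi>] by auto

lemma body_semi_enrich: "body (semi_enrich H \<xi>) = body \<xi>"
  by (simp add: semi_enrich_def body_def)

lemma head_semi_enrich: "head (semi_enrich H \<xi>) = insert (H, frontier_list \<xi>) (head \<xi>)"
  by (simp add: semi_enrich_def head_def frontier_list_def)

lemma inst_of_head_semi_enrich: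
  "inst_of h (head (semi_enrich H \<xi>)) = insert (H, map h (frontier_list \<xi>)) (inst_of h (head \<xi>))"
  by (simp add: head_semi_enrich inst_of_def)

lemma exvars_semi_enrich: "wf_tgd \<xi> \<Longrightarrow> exvars (semi_enrich H \<xi>) = exvars \<xi>"
  using set_frontier_list_subset_body[of \<xi>]
  by (auto simp: exvars_def vars_def body_semi_enrich head_semi_enrich)

locale sobl_chase_run =
  fixes \<Sigma> :: "tgd set" and Hm :: "tgd \<Rightarrow> nat" and I0 :: inst
    and Is :: "nat \<Rightarrow> inst" and Ts :: "nat \<Rightarrow> trigger"
  assumes wf: "\<forall>\<xi>\<in>\<Sigma>. wf_tgd \<xi>"
    and inj_Hm: "inj_on Hm \<Sigma>"
    and Hm_fresh: "\<forall>\<xi>\<in>\<Sigma>. Hm \<xi> \<notin> rels \<Sigma>"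
    and seq: "inf_chase_seq Sobl \<Sigma> I0 Is Ts"
    and fair: "fair Sobl \<Sigma> Is Ts"
begin

definition enrich :: "tgd \<Rightarrow> tgd" where
  "enrich \<xi> = semi_enrich (Hm \<xi>) \<xi>"

definition H_facts :: "nat \<Rightarrow> inst" where
  "H_facts i = {(Hm (fst (Ts k)), map (snd (Ts k)) (frontier_list (fst (Ts k)))) | k. k < i}"

definition sim_inst :: "nat \<Rightarrow> inst" where
  "sim_inst i = {f \<in> Is i. fst f \<in> rels \<Sigma>} \<union> H_facts i"

definition sim_trigger :: "nat \<Rightarrow> trigger" where
  "sim_trigger k = (enrich (fst (Ts k)), snd (Ts k))"

lemma body_enrich: "body (enrich \<xi>) = body \<xi>"
  by (simp add: enrich_def body_semi_enrich)

lemma fired_tgd_in: "fst (Ts i) \<in> \<Sigma>"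
  using seq by (simp add: inf_chase_seq_def applicable_def)

lemma fired_trigger: "inst_of (snd (Ts i)) (body (fst (Ts i))) \<subseteq> Is i"
  using seq by (simp add: inf_chase_seq_def applicable_def is_trigger_def)

lemma fired_fires: "fires (fst (Ts i)) (snd (Ts i)) (Is i) (Is (Suc i))"
  using seq by (simp add: inf_chase_seq_def)

lemma wf_fired_tgd: "wf_tgd (fst (Ts i))"
  using wf fired_tgd_in by blast

lemma Is_mono: "i \<le> j \<Longrightarrow> Is i \<subseteq> Is j"
proof (induction j rule: dec_induct)
  case (step j)
  then show ?case
    using fired_fires[of j] by (auto simp: fires_def)
qed simp

lemma sim_inst_mono: "i \<le> j \<Longrightarrow> sim_inst i \<subseteq> sim_inst j"
  using Is_mono unfolding sim_inst_def H_facts_def by fastforce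

lemma sim_inst_restrict_rels: "{f \<in> sim_inst i. fst f \<in> rels \<Sigma>} = {f \<in> Is i. fst f \<in> rels \<Sigma>}"
proof -
  have "Hm (fst (Ts k)) \<notin> rels \<Sigma>" for k
    using Hm_fresh fired_tgd_in by blast
  then show ?thesis
    unfolding sim_inst_def H_facts_def by auto
qed

lemma subset_sim_inst_iff:
  assumes "fst ` A \<subseteq> rels \<Sigma>"
  shows "A \<subseteq> sim_inst i \<longleftrightarrow> A \<subseteq> Is i"
proof -
  have restrict: "A \<subseteq> X \<longleftrightarrow> A \<subseteq> {f \<in> X. fst f \<in> rels \<Sigma>}" for X
    using assms by blast
  show ?thesis
    unfolding restrict[of "sim_inst i"] restrict[of "Is i"] sim_inst_restrict_rels ..
qed

lemma is_trigger_sim_inst_iff: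
  "\<xi> \<in> \<Sigma> \<Longrightarrow> is_trigger (enrich \<xi>) h (sim_inst i) \<longleftrightarrow> is_trigger \<xi> h (Is i)"
  unfolding is_trigger_def body_enrich by (rule subset_sim_inst_iff[OF rels_inst_of_body])

text \<open>\<open>Hm\<close> is injective and avoids the relations of \<open>\<Sigma>\<close>, so an \<open>H\<^sub>\<xi>\<close>-fact of the simulated
instance records a firing of \<open>\<xi>\<close> itself.\<close>

lemma H_fact_in_sim_inst_iff:
  assumes "\<xi> \<in> \<Sigma>"
  shows "(Hm \<xi>, xs) \<in> sim_inst i \<longleftrightarrow>
    (\<exists>k<i. fst (Ts k) = \<xi> \<and> xs = map (snd (Ts k)) (frontier_list \<xi>))"
proof
  assume "(Hm \<xi>, xs) \<in> sim_inst i"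
  moreover have "Hm \<xi> \<notin> rels \<Sigma>"
    using Hm_fresh assms by blast
  ultimately obtain k where k: "k < i" "Hm \<xi> = Hm (fst (Ts k))"
    "xs = map (snd (Ts k)) (frontier_list (fst (Ts k)))"
    unfolding sim_inst_def H_facts_def by auto
  moreover have "fst (Ts k) = \<xi>"
    using inj_Hm k(2) assms fired_tgd_in[of k] by (metis inj_on_def)
  ultimately show "\<exists>k<i. fst (Ts k) = \<xi> \<and> xs = map (snd (Ts k)) (frontier_list \<xi>)"
    by auto
qed (auto simp: sim_inst_def H_facts_def)

text \<open>An earlier firing of \<open>(\<xi>, g)\<close> with \<open>g\<close> agreeing with \<open>h\<close> on the frontier already
satisfies the enriched head: extend \<open>h\<close> beyond the body by the null assignment of that step.\<close>

lemma head_satisfied_if_fired: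
  assumes \<xi>: "\<xi> \<in> \<Sigma>" and k: "k < i" "fst (Ts k) = \<xi>"
    and agree: "\<forall>x\<in>frontier \<xi>. snd (Ts k) x = h x"
  shows "\<exists>h'. (\<forall>x\<in>vars (body \<xi>). h' x = h x) \<and> inst_of h' (head (enrich \<xi>)) \<subseteq> sim_inst i"
proof -
  have wf\<xi>: "wf_tgd \<xi>"
    using wf \<xi> by blast
  obtain g where g: "\<forall>x\<in>vars (body \<xi>). g x = snd (Ts k) x"
    "Is (Suc k) = Is k \<union> inst_of g (head \<xi>)"
    using fired_fires[of k] k unfolding fires_def by blast
  define h' where "h' x = (if x \<in> vars (body \<xi>) then h x else g x)" for x
  have "inst_of h' (head \<xi>) = inst_of g (head \<xi>)"
    by (rule inst_of_cong) (use agree g(1) in \<open>auto simp: h'_def frontier_def\<close>)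
  also have "\<dots> \<subseteq> sim_inst (Suc k)"
    using g(2) by (subst subset_sim_inst_iff[OF rels_inst_of_head[OF \<xi>]]) blast
  also have "\<dots> \<subseteq> sim_inst i"
    using sim_inst_mono k by simp
  finally have head: "inst_of h' (head \<xi>) \<subseteq> sim_inst i" .
  have "map h' (frontier_list \<xi>) = map h (frontier_list \<xi>)"
    by (rule map_frontier_list_cong[OF wf\<xi>]) (simp add: h'_def)
  also have "\<dots> = map (snd (Ts k)) (frontier_list \<xi>)"
    using map_frontier_list_eq_iff[OF wf\<xi>, of h "snd (Ts k)"] agree by simp
  finally have "(Hm \<xi>, map h' (frontier_list \<xi>)) \<in> sim_inst i"
    using H_fact_in_sim_inst_iff[OF \<xi>] k by blast
  with head have "inst_of h' (head (enrich \<xi>)) \<subseteq> sim_inst i"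
    unfolding enrich_def inst_of_head_semi_enrich by blast
  moreover have "\<forall>x\<in>vars (body \<xi>). h' x = h x"
    by (simp add: h'_def)
  ultimately show ?thesis
    by blast
qed

lemma head_satisfied_iff_fired:
  assumes \<xi>: "\<xi> \<in> \<Sigma>"
  shows "(\<exists>h'. (\<forall>x\<in>vars (body \<xi>). h' x = h x) \<and> inst_of h' (head (enrich \<xi>)) \<subseteq> sim_inst i)
    \<longleftrightarrow> (\<exists>k<i. fst (Ts k) = \<xi> \<and> (\<forall>x\<in>frontier \<xi>. snd (Ts k) x = h x))"
proof
  have wf\<xi>: "wf_tgd \<xi>"
    using wf \<xi> by blast
  assume "\<exists>h'. (\<forall>x\<in>vars (body \<xi>). h' x = h x) \<and> inst_of h' (head (enrich \<xi>)) \<subseteq> sim_inst i"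
  then obtain h' where h': "\<forall>x\<in>vars (body \<xi>). h' x = h x"
    and "inst_of h' (head (enrich \<xi>)) \<subseteq> sim_inst i"
    by blast
  then have "(Hm \<xi>, map h' (frontier_list \<xi>)) \<in> sim_inst i"
    unfolding enrich_def inst_of_head_semi_enrich by blast
  then obtain k where k: "k < i" "fst (Ts k) = \<xi>"
    "map h' (frontier_list \<xi>) = map (snd (Ts k)) (frontier_list \<xi>)"
    using H_fact_in_sim_inst_iff[OF \<xi>] by blast
  have "map (snd (Ts k)) (frontier_list \<xi>) = map h (frontier_list \<xi>)"
    using k(3) map_frontier_list_cong[OF wf\<xi> h'] by simp
  then have "\<forall>x\<in>frontier \<xi>. snd (Ts k) x = h x"
    using map_frontier_list_eq_iff[OF wf\<xi>] by blast
  with k(1,2) show "\<exists>k<i. fst (Ts k) = \<xi> \<and> (\<forall>x\<in>frontier \<xi>. snd (Ts k) x = h x)"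
    by blast
qed (use head_satisfied_if_fired[OF \<xi>] in blast)

lemma applicable_sim_iff:
  assumes \<xi>: "\<xi> \<in> \<Sigma>"
  shows "applicable Std (enrich ` \<Sigma>) sim_inst sim_trigger i (enrich \<xi>) h \<longleftrightarrow>
    applicable Sobl \<Sigma> Is Ts i \<xi> h"
proof -
  have active: "active (enrich \<xi>) h (sim_inst i) \<longleftrightarrow>
      is_trigger \<xi> h (Is i) \<and> \<not> (\<exists>k<i. fst (Ts k) = \<xi> \<and> (\<forall>x\<in>frontier \<xi>. snd (Ts k) x = h x))"
    unfolding active_def body_enrich is_trigger_sim_inst_iff[OF \<xi>] head_satisfied_iff_fired[OF \<xi>] ..
  have "enrich \<xi> \<in> enrich ` \<Sigma>"
    using \<xi> by (rule imageI)
  then show ?thesis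
    unfolding applicable_def variant.case active is_trigger_sim_inst_iff[OF \<xi>]
    using \<xi> by (simp only: conj_left_absorb)
qed

lemma terms_of_H_facts: "terms_of (H_facts i) \<subseteq> terms_of (Is i)"
proof -
  have "snd (Ts k) ` set (frontier_list (fst (Ts k))) \<subseteq> terms_of (Is i)" if "k < i" for k
  proof -
    have "snd (Ts k) ` set (frontier_list (fst (Ts k)))
        \<subseteq> terms_of (inst_of (snd (Ts k)) (body (fst (Ts k))))"
      unfolding terms_of_inst_of using set_frontier_list_subset_body[OF wf_fired_tgd] by blast
    also have "\<dots> \<subseteq> terms_of (Is i)"
      using fired_trigger[of k] Is_mono[of k i] that by (intro terms_of_mono) auto
    finally show ?thesis .
  qed
  then show ?thesis
    unfolding H_facts_def terms_of_def by fastforce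
qed

lemma terms_of_sim_inst: "terms_of (sim_inst i) \<subseteq> terms_of (Is i)"
  using terms_of_H_facts[of i] terms_of_mono[of "{f \<in> Is i. fst f \<in> rels \<Sigma>}" "Is i"]
  unfolding sim_inst_def terms_of_def by blast

lemma H_facts_Suc:
  "H_facts (Suc i) = insert (Hm (fst (Ts i)), map (snd (Ts i)) (frontier_list (fst (Ts i)))) (H_facts i)"
  unfolding H_facts_def by (auto simp: less_Suc_eq)

lemma sim_inst_Suc:
  assumes "\<forall>x\<in>vars (body (fst (Ts i))). h' x = snd (Ts i) x"
    and "Is (Suc i) = Is i \<union> inst_of h' (head (fst (Ts i)))"
  shows "sim_inst (Suc i) = sim_inst i \<union> inst_of h' (head (enrich (fst (Ts i))))"
proof -
  have restrict: "{f \<in> Is (Suc i). fst f \<in> rels \<Sigma>} =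
      {f \<in> Is i. fst f \<in> rels \<Sigma>} \<union> inst_of h' (head (fst (Ts i)))"
    using assms(2) rels_inst_of_head[OF fired_tgd_in] by blast
  have frontier: "map h' (frontier_list (fst (Ts i))) = map (snd (Ts i)) (frontier_list (fst (Ts i)))"
    using map_frontier_list_cong[OF wf_fired_tgd assms(1)] .
  show ?thesis
    unfolding sim_inst_def H_facts_Suc enrich_def inst_of_head_semi_enrich restrict frontier
    by blast
qed

lemma inf_chase_seq_sim: "inf_chase_seq Std (enrich ` \<Sigma>) (sim_inst 0) sim_inst sim_trigger"
  unfolding inf_chase_seq_def
proof (intro conjI allI)
  fix i
  have "applicable Sobl \<Sigma> Is Ts i (fst (Ts i)) (snd (Ts i))"
    using seq by (simp add: inf_chase_seq_def)
  then show "applicable Std (enrich ` \<Sigma>) sim_inst sim_trigger i (fst (sim_trigger i)) (snd (sim_trigger i))"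
    unfolding sim_trigger_def fst_conv snd_conv applicable_sim_iff[OF fired_tgd_in] .
  obtain h' where h': "\<forall>x\<in>vars (body (fst (Ts i))). h' x = snd (Ts i) x"
    "inj_on h' (exvars (fst (Ts i)))"
    "\<forall>z\<in>exvars (fst (Ts i)). (\<exists>n. h' z = Nul n) \<and> h' z \<notin> terms_of (Is i)"
    "Is (Suc i) = Is i \<union> inst_of h' (head (fst (Ts i)))"
    using fired_fires[of i] unfolding fires_def by blast
  have exvars: "exvars (enrich (fst (Ts i))) = exvars (fst (Ts i))"
    unfolding enrich_def by (rule exvars_semi_enrich[OF wf_fired_tgd])
  show "fires (fst (sim_trigger i)) (snd (sim_trigger i)) (sim_inst i) (sim_inst (Suc i))"
    unfolding fires_def sim_trigger_def fst_conv snd_conv body_enrich exvars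
    by (intro exI[of _ h'] conjI h'(1,2) sim_inst_Suc[OF h'(1,4)])
      (use h'(3) terms_of_sim_inst[of i] in blast)
qed simp

lemma fair_sim: "fair Std (enrich ` \<Sigma>) sim_inst sim_trigger"
  unfolding fair_def
proof (intro allI impI)
  fix i \<xi>' h
  assume applicable: "applicable Std (enrich ` \<Sigma>) sim_inst sim_trigger i \<xi>' h"
  then obtain \<xi> where \<xi>: "\<xi> \<in> \<Sigma>" and \<xi>': "\<xi>' = enrich \<xi>"
    unfolding applicable_def by blast
  then have "applicable Sobl \<Sigma> Is Ts i \<xi> h"
    using applicable applicable_sim_iff by blast
  then obtain j where "j > i" "\<not> applicable Sobl \<Sigma> Is Ts j \<xi> h"
    using fair unfolding fair_def by blast
  then show "\<exists>j>i. \<not> applicable Std (enrich ` \<Sigma>) sim_inst sim_trigger j \<xi>' h"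
    unfolding \<xi>' applicable_sim_iff[OF \<xi>] by blast
qed

lemma sim_inst_0_subset: "sim_inst 0 \<subseteq> I0"
  using seq unfolding sim_inst_def H_facts_def inf_chase_seq_def by auto

end

lemma CT_AA_Sobl_if_semi_enrichment_CT_AA_Std:
  assumes "is_semi_enrichment \<Sigma> \<Sigma>'" and "\<Sigma>' \<in> CT_AA Std"
    and "finite \<Sigma>" and "\<forall>\<xi>\<in>\<Sigma>. wf_tgd \<xi>"
  shows "\<Sigma> \<in> CT_AA Sobl"
proof -
  obtain Hm where Hm: "inj_on Hm \<Sigma>" "\<forall>\<xi>\<in>\<Sigma>. Hm \<xi> \<notin> rels \<Sigma>"
    and \<Sigma>': "\<Sigma>' = (\<lambda>\<xi>. semi_enrich (Hm \<xi>) \<xi>) ` \<Sigma>"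
    using assms(1) unfolding is_semi_enrichment_def by blast
  have "\<not> (inf_chase_seq Sobl \<Sigma> I0 Is Ts \<and> fair Sobl \<Sigma> Is Ts)" if "finite I0" for I0 Is Ts
  proof
    assume "inf_chase_seq Sobl \<Sigma> I0 Is Ts \<and> fair Sobl \<Sigma> Is Ts"
    then interpret sobl_chase_run \<Sigma> Hm I0 Is Ts
      using assms(4) Hm by unfold_locales auto
    have "enrich ` \<Sigma> = \<Sigma>'"
      using \<Sigma>' by (simp add: enrich_def[abs_def])
    moreover have "finite (sim_inst 0)"
      using sim_inst_0_subset that finite_subset by blast
    ultimately show False
      using assms(2) inf_chase_seq_sim fair_sim unfolding CT_AA_def by blast
  qed
  then show ?thesis
    using assms(3,4) unfolding CT_AA_def by blast
qed

theorem proposition5: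
  fixes \<C> :: "tgd set set"
  assumes "\<C> \<subseteq> CT_AA Std"
    and "\<forall>\<Sigma>\<in>\<C>. \<exists>\<Sigma>'. is_semi_enrichment \<Sigma> \<Sigma>' \<and> \<Sigma>' \<in> \<C>"
  shows "\<C> \<subseteq> CT_AA Sobl"
proof
  fix \<Sigma> assume "\<Sigma> \<in> \<C>"
  then obtain \<Sigma>' where "is_semi_enrichment \<Sigma> \<Sigma>'" "\<Sigma>' \<in> CT_AA Std" and "\<Sigma> \<in> CT_AA Std"
    using assms by blast
  then show "\<Sigma> \<in> CT_AA Sobl"
    using CT_AA_Sobl_if_semi_enrichment_CT_AA_Std by (auto simp: CT_AA_def)
qed

end
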